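(* Let $\Gamma$ be a finite simplicial graph without isolated vertices, and let $v_1,v_2$ be distinct vertices of $\Gamma$ with $d(v_1,v_2)\ge3$ (distance $\infty$ if in different components). If $f\in\mathrm{Aut}(A_\Gamma)$ satisfies $v_1\in\mathrm{esupp}(f(v_1))$, then $v_2\notin\mathrm{esupp}(f(v_1))$.
   Context: $A_\Gamma$ is the right-angled Artin group with generators $V\Gamma$ and relations $[a,b]=1$ for edges. For $g\in A_\Gamma$, $\mathrm{esupp}(g)$ is the set of generators appearing in a word of minimal length among all words representing conjugates of $g$. *)

theory Defs
  imports "HOL-Algebra.Group"
begin

text \<open>Simplicial graph: finite vertex set V, symmetric irreflexive edge relation E on V.
Words: lists of letters (v, s), meaning v if s = True and v^-1 if s = False.\<close>

definition simple_graph :: "'v set \<Rightarrow> ('v \<Rightarrow> 'v \<Rightarrow> bool) \<Rightarrow> bool" where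
  "simple_graph V E \<longleftrightarrow> finite V \<and> (\<forall>a b. E a b \<longrightarrow> a \<in> V \<and> b \<in> V)
     \<and> (\<forall>a b. E a b \<longrightarrow> E b a) \<and> (\<forall>a. \<not> E a a)"

definition no_isolated :: "'v set \<Rightarrow> ('v \<Rightarrow> 'v \<Rightarrow> bool) \<Rightarrow> bool" where
  "no_isolated V E \<longleftrightarrow> (\<forall>v\<in>V. \<exists>u. E v u)"

text \<open>d(v1,v2) \<ge> 3 (with d = \<infinity> across components): no path of length \<le> 2.\<close>
definition dist_ge_3 :: "('v \<Rightarrow> 'v \<Rightarrow> bool) \<Rightarrow> 'v \<Rightarrow> 'v \<Rightarrow> bool" where
  "dist_ge_3 E a b \<longleftrightarrow> a \<noteq> b \<and> \<not> E a b \<and> \<not> (\<exists>u. E a u \<and> E u b)"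

definition raag_words :: "'v set \<Rightarrow> ('v \<times> bool) list set" where
  "raag_words V = lists (V \<times> UNIV)"

definition raag_step :: "'v set \<Rightarrow> ('v \<Rightarrow> 'v \<Rightarrow> bool) \<Rightarrow> (('v \<times> bool) list \<times> ('v \<times> bool) list) set" where
  "raag_step V E =
     {(xs @ [(a, s), (a, \<not> s)] @ ys, xs @ ys) | xs ys a s. xs @ [(a, s), (a, \<not> s)] @ ys \<in> raag_words V}
   \<union> {(xs @ [(a, s), (c, t)] @ ys, xs @ [(c, t), (a, s)] @ ys) | xs ys a s c t.
        E a c \<and> xs @ [(a, s), (c, t)] @ ys \<in> raag_words V}"

definition raag_rel :: "'v set \<Rightarrow> ('v \<Rightarrow> 'v \<Rightarrow> bool) \<Rightarrow> (('v \<times> bool) list \<times> ('v \<times> bool) list) set" where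
  "raag_rel V E = Id_on (raag_words V) \<union> (raag_step V E \<union> (raag_step V E)\<inverse>)\<^sup>+"

definition raag :: "'v set \<Rightarrow> ('v \<Rightarrow> 'v \<Rightarrow> bool) \<Rightarrow> ('v \<times> bool) list set monoid" where
  "raag V E = \<lparr> carrier = raag_words V // raag_rel V E,
                mult = (\<lambda>X Y. raag_rel V E `` {(SOME x. x \<in> X) @ (SOME y. y \<in> Y)}),
                one = raag_rel V E `` {[]} \<rparr>"

definition raag_gen :: "'v set \<Rightarrow> ('v \<Rightarrow> 'v \<Rightarrow> bool) \<Rightarrow> 'v \<Rightarrow> ('v \<times> bool) list set" where
  "raag_gen V E v = raag_rel V E `` {[(v, True)]}"

definition esupp :: "'v set \<Rightarrow> ('v \<Rightarrow> 'v \<Rightarrow> bool) \<Rightarrow> ('v \<times> bool) list set \<Rightarrow> 'v set" where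
  "esupp V E g =
    (let G = raag V E;
         C = {w. \<exists>h \<in> carrier G. w \<in> inv\<^bsub>G\<^esub> h \<otimes>\<^bsub>G\<^esub> g \<otimes>\<^bsub>G\<^esub> h}
     in {v. \<exists>w \<in> C. (\<forall>w' \<in> C. length w \<le> length w') \<and> v \<in> fst ` set w})"

end

(*
  Let w be a shortest word representing a conjugate of g = f(v1). Then w is cyclically
  reduced, and deleting a vertex from a conjugator shows that all shortest such words
  have the same support, so esupp g = supp w. Suppose v1 and v2, at distance at least 3,
  both lie in supp w. If b commutes with [w], then w z and z w agree up to commuting
  adjacent letters for a suitable reduced representative z of b [w]^N; projecting onto
  pairs of non-adjacent vertices shows that all letters occur in w and z in a common
  ratio, whence [w]^p = b^q [w]^(N q) with q > 0. For a neighbour u of v1 the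
  corresponding conjugate of f(u) commutes with [w], and injectivity of f yields
  v1^p = u^q v1^(N q), impossible since u has exponent sum q > 0 on the right only.
*)
theory Submission
  imports Defs
begin

section \<open>Words and commutation equivalence\<close>

definition letter_inv :: "'v \<times> bool \<Rightarrow> 'v \<times> bool" where
  "letter_inv l = (fst l, \<not> snd l)"

lemma letter_inv_inv[simp]: "letter_inv (letter_inv l) = l"
  by (simp add: letter_inv_def)

lemma fst_letter_inv[simp]: "fst (letter_inv l) = fst l"
  by (simp add: letter_inv_def)

lemma letter_inv_neq[simp]: "letter_inv l \<noteq> l" "l \<noteq> letter_inv l"
  by (auto simp: letter_inv_def prod_eq_iff)

abbreviation supp :: "('v \<times> bool) list \<Rightarrow> 'v set" where
  "supp w \<equiv> fst ` set w"

definition proj :: "'v \<Rightarrow> 'v \<Rightarrow> ('v \<times> bool) list \<Rightarrow> ('v \<times> bool) list" where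
  "proj c d w = filter (\<lambda>l. fst l = c \<or> fst l = d) w"

lemma proj_simps[simp]:
  "proj c d [] = []"
  "proj c d (l # w) = (if fst l = c \<or> fst l = d then l # proj c d w else proj c d w)"
  "proj c d (u @ w) = proj c d u @ proj c d w"
  "proj c d (rev w) = rev (proj c d w)"
  by (auto simp: proj_def rev_filter)

definition word_pow :: "nat \<Rightarrow> ('v \<times> bool) list \<Rightarrow> ('v \<times> bool) list" where
  "word_pow n w = concat (replicate n w)"

lemma word_pow_simps[simp]:
  "word_pow 0 w = []"
  "word_pow (Suc n) w = w @ word_pow n w"
  "length (word_pow n w) = n * length w"
  by (simp_all add: word_pow_def length_concat sum_list_replicate)

lemma word_pow_snoc: "word_pow n w @ w = w @ word_pow n w"
  by (induction n) auto

definition occ :: "'v \<Rightarrow> ('v \<times> bool) list \<Rightarrow> nat" where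
  "occ c w = length (filter (\<lambda>l. fst l = c) w)"

lemma occ_simps[simp]:
  "occ c [] = 0"
  "occ c (u @ w) = occ c u + occ c w"
  "occ c (l # w) = (if fst l = c then Suc (occ c w) else occ c w)"
  by (simp_all add: occ_def)

lemma occ_concat_replicate: "occ c (concat (replicate n r)) = n * occ c r"
  by (induction n) auto

lemma occ_proj: "c = a \<or> c = b \<Longrightarrow> occ c (proj a b w) = occ c w"
  by (induction w) (auto simp: proj_def)

lemma proj_concat_replicate: "proj a b (concat (replicate n r)) = concat (replicate n (proj a b r))"
  by (induction n) auto

lemma concat_replicate_mult:
  "concat (replicate n (concat (replicate m r))) = concat (replicate (n * m) r)"
  by (induction n) (auto simp: replicate_add)

lemma occ_pos: "c \<in> supp w \<Longrightarrow> 0 < occ c w"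
  by (induction w) auto

definition comm_step :: "('v \<Rightarrow> 'v \<Rightarrow> bool) \<Rightarrow> ('v \<times> bool) list \<Rightarrow> ('v \<times> bool) list \<Rightarrow> bool" where
  "comm_step E s t \<longleftrightarrow> (\<exists>p q a b. E (fst a) (fst b) \<and> s = p @ a # b # q \<and> t = p @ b # a # q)"

definition comm_equiv :: "('v \<Rightarrow> 'v \<Rightarrow> bool) \<Rightarrow> ('v \<times> bool) list \<Rightarrow> ('v \<times> bool) list \<Rightarrow> bool" where
  "comm_equiv E = (comm_step E)\<^sup>*\<^sup>*"

locale commutation_graph =
  fixes E :: "'v \<Rightarrow> 'v \<Rightarrow> bool"
  assumes E_sym: "E a b \<Longrightarrow> E b a" and E_irrefl: "\<not> E a a"
begin

abbreviation comm_equiv_infix (infix "\<approx>" 50) where "s \<approx> t \<equiv> comm_equiv E s t"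

lemma comm_equiv_refl[simp]: "s \<approx> s"
  by (simp add: comm_equiv_def)

lemma comm_equiv_sym: "s \<approx> t \<Longrightarrow> t \<approx> s"
  unfolding comm_equiv_def
proof (induction rule: rtranclp_induct)
  case (step y z)
  from \<open>comm_step E y z\<close> have "comm_step E z y" using E_sym unfolding comm_step_def by blast
  then show ?case using step.IH by (rule converse_rtranclp_into_rtranclp)
qed simp

lemma comm_equiv_trans: "s \<approx> t \<Longrightarrow> t \<approx> u \<Longrightarrow> s \<approx> u"
  unfolding comm_equiv_def by (rule rtranclp_trans)

lemma comm_equiv_swap: "E (fst a) (fst b) \<Longrightarrow> p @ a # b # q \<approx> p @ b # a # q"
  unfolding comm_equiv_def comm_step_def by blast

lemma comm_equiv_swap_Cons: "E (fst a) (fst b) \<Longrightarrow> a # b # q \<approx> b # a # q"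
  using comm_equiv_swap[of a b "[]" q] by simp

lemma comm_equiv_Cons: "s \<approx> t \<Longrightarrow> a # s \<approx> a # t"
  unfolding comm_equiv_def
proof (induction rule: rtranclp_induct)
  case (step y z)
  from \<open>comm_step E y z\<close> have "comm_step E (a # y) (a # z)"
    unfolding comm_step_def by (metis append_Cons)
  then show ?case by (rule rtranclp.rtrancl_into_rtrancl[OF step.IH])
qed simp

lemma comm_equiv_proj: "s \<approx> t \<Longrightarrow> \<not> E c d \<Longrightarrow> proj c d s = proj c d t"
  unfolding comm_equiv_def
proof (induction rule: rtranclp_induct)
  case (step y z)
  from \<open>comm_step E y z\<close> obtain p q a b where ab: "E (fst a) (fst b)" "y = p @ a # b # q" "z = p @ b # a # q"
    unfolding comm_step_def by blast
  have "\<not> ((fst a = c \<or> fst a = d) \<and> (fst b = c \<or> fst b = d))"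
    using ab(1) \<open>\<not> E c d\<close> E_sym E_irrefl by metis
  then show ?case using ab step.IH \<open>\<not> E c d\<close> by auto
qed simp

lemma comm_equiv_length_set: "s \<approx> t \<Longrightarrow> length s = length t \<and> set s = set t"
  unfolding comm_equiv_def
proof (induction rule: rtranclp_induct)
  case (step y z)
  from \<open>comm_step E y z\<close> obtain p q a b where "y = p @ a # b # q" "z = p @ b # a # q"
    unfolding comm_step_def by blast
  then show ?case using step.IH by auto
qed simp

lemma comm_equiv_length: "s \<approx> t \<Longrightarrow> length s = length t"
  using comm_equiv_length_set by blast

lemma comm_equiv_set: "s \<approx> t \<Longrightarrow> set s = set t"
  using comm_equiv_length_set by blast

lemma comm_equiv_move_front:
  "\<forall>k\<in>set t0. E (fst k) (fst m) \<Longrightarrow> t0 @ m # t2 \<approx> m # t0 @ t2"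
proof (induction t0)
  case (Cons a t0)
  have "a # t0 @ m # t2 \<approx> a # m # t0 @ t2"
    using Cons by (auto intro: comm_equiv_Cons)
  moreover have "a # m # t0 @ t2 \<approx> m # a # t0 @ t2"
    using comm_equiv_swap_Cons Cons.prems by simp
  ultimately show ?case by (auto intro: comm_equiv_trans)
qed simp

lemma comm_equiv_extract_head:
  assumes "\<forall>c. \<not> E c (fst m) \<longrightarrow> (\<exists>r. proj c (fst m) t = m # r)"
  shows "\<exists>r. t \<approx> m # r"
proof -
  obtain r0 where r0: "proj (fst m) (fst m) t = m # r0" using assms E_irrefl by blast
  then have "m \<in> set (proj (fst m) (fst m) t)" by simp
  then have "\<exists>x\<in>set t. fst x = fst m" by (auto simp: proj_def)
  from split_list_first_prop[OF this] obtain t0 m' t2 where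
    t: "t = t0 @ m' # t2" and m': "fst m' = fst m" and t0: "\<forall>x\<in>set t0. fst x \<noteq> fst m"
    by blast
  have "proj (fst m) (fst m) t = m' # proj (fst m) (fst m) t2"
    using t m' t0 by (simp add: proj_def)
  with r0 have "m' = m" by simp
  have "E (fst k) (fst m)" if k: "k \<in> set t0" for k
  proof (rule ccontr)
    assume "\<not> E (fst k) (fst m)"
    then obtain r where r: "proj (fst k) (fst m) t = m # r" using assms by blast
    have "proj (fst k) (fst m) t0 \<noteq> []"
      using k by (auto simp: proj_def filter_empty_conv)
    then obtain h hs where h: "proj (fst k) (fst m) t0 = h # hs"
      by (cases "proj (fst k) (fst m) t0") auto
    then have "h \<in> set t0" by (metis filter_is_subset list.set_intros(1) proj_def subsetD)
    moreover have "h = m" using r h t by simp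
    ultimately show False using t0 by blast
  qed
  then show ?thesis using comm_equiv_move_front[of t0 m t2] t \<open>m' = m\<close> by blast
qed

text \<open>The projection lemma of trace theory.\<close>

lemma comm_equiv_iff_proj:
  "s \<approx> t \<longleftrightarrow> (\<forall>c d. \<not> E c d \<longrightarrow> proj c d s = proj c d t)"
proof
  assume "s \<approx> t" then show "\<forall>c d. \<not> E c d \<longrightarrow> proj c d s = proj c d t"
    using comm_equiv_proj by blast
next
  assume "\<forall>c d. \<not> E c d \<longrightarrow> proj c d s = proj c d t"
  then show "s \<approx> t"
  proof (induction s arbitrary: t)
    case Nil
    have "t = []"
    proof (rule ccontr)
      assume "t \<noteq> []"
      then obtain l where "l \<in> set t" by (cases t) auto
      then have "proj (fst l) (fst l) t \<noteq> []" by (auto simp: proj_def filter_empty_conv)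
      moreover have "proj (fst l) (fst l) t = []" using Nil.prems E_irrefl by simp
      ultimately show False by simp
    qed
    then show ?case by simp
  next
    case (Cons l s)
    have "\<forall>c. \<not> E c (fst l) \<longrightarrow> (\<exists>r. proj c (fst l) t = l # r)"
      using Cons.prems by (metis proj_simps(2))
    then obtain r where r: "t \<approx> l # r" using comm_equiv_extract_head by blast
    have "proj c d s = proj c d r" if "\<not> E c d" for c d
    proof -
      have "proj c d (l # s) = proj c d (l # r)"
        using Cons.prems comm_equiv_proj[OF r that] that by simp
      then show ?thesis by (simp split: if_splits)
    qed
    then have "l # s \<approx> l # r" using Cons.IH comm_equiv_Cons by blast
    then show ?case using r comm_equiv_sym comm_equiv_trans by blast
  qed
qed

lemma comm_equiv_append: "s \<approx> t \<Longrightarrow> s' \<approx> t' \<Longrightarrow> s @ s' \<approx> t @ t'"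
  by (simp add: comm_equiv_iff_proj)

lemma comm_equiv_rev_iff: "rev s \<approx> rev t \<longleftrightarrow> s \<approx> t"
  by (simp add: comm_equiv_iff_proj)

lemma comm_equiv_Cons_cancel: "l # s \<approx> l # t \<Longrightarrow> s \<approx> t"
  unfolding comm_equiv_iff_proj by (metis list.inject proj_simps(2))

text \<open>Levi's lemma of trace theory.\<close>

lemma comm_equiv_Cons_Cons:
  assumes "l # t \<approx> m # s" "l \<noteq> m"
  shows "E (fst l) (fst m) \<and> (\<exists>r. t \<approx> m # r \<and> s \<approx> l # r)"
proof -
  have fst_ne: "fst l \<noteq> fst m"
    using comm_equiv_proj[OF assms(1), of "fst l" "fst l"] E_irrefl assms(2) by auto
  have adj: "E (fst l) (fst m)"
  proof (rule ccontr)
    assume "\<not> E (fst l) (fst m)"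
    from comm_equiv_proj[OF assms(1) this] show False using assms(2) by simp
  qed
  have "\<exists>r. proj c (fst m) t = m # r" if "\<not> E c (fst m)" for c
  proof -
    have "proj c (fst m) (l # t) = m # proj c (fst m) s"
      using comm_equiv_proj[OF assms(1) that] by simp
    then show ?thesis using assms(2) fst_ne by (cases "fst l = c") simp_all
  qed
  then obtain r where r: "t \<approx> m # r" using comm_equiv_extract_head by blast
  have "l # t \<approx> l # m # r" using r by (rule comm_equiv_Cons)
  moreover have "l # m # r \<approx> m # l # r" using comm_equiv_swap_Cons adj by simp
  ultimately have "m # s \<approx> m # l # r"
    using assms(1) comm_equiv_sym comm_equiv_trans by blast
  then have "s \<approx> l # r" by (rule comm_equiv_Cons_cancel)
  then show ?thesis using adj r by blast
qed

lemma comm_equiv_head_of_prefix: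
  assumes "A @ B \<approx> l # t" "\<exists>m\<in>set A. fst m = fst l"
  shows "\<exists>A'. A \<approx> l # A'"
  using assms
proof (induction A arbitrary: t)
  case (Cons a A)
  show ?case
  proof (cases "a = l")
    case False
    from comm_equiv_Cons_Cons[OF _ False] Cons.prems(1) obtain r where
      adj: "E (fst a) (fst l)" and r: "A @ B \<approx> l # r" by auto
    have "\<exists>m\<in>set A. fst m = fst l" using Cons.prems(2) adj E_irrefl by auto
    then obtain A' where "A \<approx> l # A'" using Cons.IH r by blast
    then have "a # A \<approx> a # l # A'" by (rule comm_equiv_Cons)
    moreover have "a # l # A' \<approx> l # a # A'" using comm_equiv_swap_Cons adj by simp
    ultimately show ?thesis using comm_equiv_trans by blast
  qed (use comm_equiv_refl in blast)
qed simp

section \<open>Reduced and cyclically reduced words\<close>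

definition reduced :: "('v \<times> bool) list \<Rightarrow> bool" where
  "reduced s \<longleftrightarrow> \<not> (\<exists>p l q. s \<approx> p @ l # letter_inv l # q)"

lemma reduced_comm_equiv: "s \<approx> t \<Longrightarrow> reduced s \<Longrightarrow> reduced t"
  unfolding reduced_def using comm_equiv_trans by blast

lemma reduced_Nil[simp]: "reduced []"
  unfolding reduced_def using comm_equiv_length by fastforce

lemma reduced_appendD: "reduced (u @ s) \<Longrightarrow> reduced u \<and> reduced s"
proof -
  assume red: "reduced (u @ s)"
  have "reduced s"
    unfolding reduced_def
  proof
    assume "\<exists>p l q. s \<approx> p @ l # letter_inv l # q"
    then obtain p l q where "s \<approx> p @ l # letter_inv l # q" by blast
    then have "u @ s \<approx> (u @ p) @ l # letter_inv l # q"
      using comm_equiv_append[OF comm_equiv_refl] by simp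
    then show False using red unfolding reduced_def by blast
  qed
  moreover have "reduced u"
    unfolding reduced_def
  proof
    assume "\<exists>p l q. u \<approx> p @ l # letter_inv l # q"
    then obtain p l q where "u \<approx> p @ l # letter_inv l # q" by blast
    then have "u @ s \<approx> p @ l # letter_inv l # (q @ s)"
      using comm_equiv_append[OF _ comm_equiv_refl] by fastforce
    then show False using red unfolding reduced_def by blast
  qed
  ultimately show ?thesis by simp
qed

lemma reduced_ConsD: "reduced (l # s) \<Longrightarrow> reduced s"
  using reduced_appendD[of "[l]" s] by simp

lemma Cons_no_cancel_pair_head:
  assumes "reduced t" "\<not> (\<exists>t1. t \<approx> letter_inv l # t1)"
  shows "\<not> l # t \<approx> k # letter_inv k # q"
proof
  assume lt: "l # t \<approx> k # letter_inv k # q"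
  show False
  proof (cases "k = l")
    case True
    then show False using lt assms(2) comm_equiv_Cons_cancel by fastforce
  next
    case False
    from comm_equiv_Cons_Cons[OF lt False[symmetric]] obtain r where
      r1: "t \<approx> k # r" and r2: "letter_inv k # q \<approx> l # r" by auto
    show False
    proof (cases "letter_inv k = l")
      case True
      then show False using r1 assms(2) by auto
    next
      case False
      from comm_equiv_Cons_Cons[OF r2 False] obtain r' where "r \<approx> letter_inv k # r'" by blast
      then have "t \<approx> [] @ k # letter_inv k # r'"
        using r1 comm_equiv_Cons comm_equiv_trans by auto
      then show False using assms(1) unfolding reduced_def by blast
    qed
  qed
qed

lemma Cons_no_cancel_pair:
  "reduced t \<Longrightarrow> \<not> (\<exists>t1. t \<approx> letter_inv l # t1) \<Longrightarrow> \<not> l # t \<approx> p @ k # letter_inv k # q"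
proof (induction p arbitrary: t)
  case Nil
  then show ?case using Cons_no_cancel_pair_head by simp
next
  case (Cons p0 p')
  show ?case
  proof
    assume lt: "l # t \<approx> (p0 # p') @ k # letter_inv k # q"
    show False
    proof (cases "p0 = l")
      case True
      then have "t \<approx> p' @ k # letter_inv k # q" using lt comm_equiv_Cons_cancel by simp
      then show False using Cons.prems(1) unfolding reduced_def by blast
    next
      case False
      from comm_equiv_Cons_Cons[OF _ False[symmetric]] lt obtain r where
        adj: "E (fst l) (fst p0)" and r1: "t \<approx> p0 # r" and r2: "p' @ k # letter_inv k # q \<approx> l # r"
        by auto
      have "reduced r"
        using reduced_comm_equiv[OF r1 Cons.prems(1)] reduced_ConsD by blast
      moreover have "\<not> (\<exists>t1. r \<approx> letter_inv l # t1)"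
      proof
        assume "\<exists>t1. r \<approx> letter_inv l # t1"
        then obtain t1 where "r \<approx> letter_inv l # t1" by blast
        then have "t \<approx> p0 # letter_inv l # t1" using r1 comm_equiv_Cons comm_equiv_trans by blast
        moreover have "p0 # letter_inv l # t1 \<approx> letter_inv l # p0 # t1"
          using comm_equiv_swap_Cons adj E_sym by simp
        ultimately show False using Cons.prems(2) comm_equiv_trans by blast
      qed
      ultimately show False using Cons.IH r2 comm_equiv_sym by blast
    qed
  qed
qed

lemma reduced_Cons_iff:
  "reduced t \<Longrightarrow> reduced (l # t) \<longleftrightarrow> \<not> (\<exists>t1. t \<approx> letter_inv l # t1)"
proof
  assume "reduced (l # t)"
  show "\<not> (\<exists>t1. t \<approx> letter_inv l # t1)"
  proof
    assume "\<exists>t1. t \<approx> letter_inv l # t1"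
    then obtain t1 where "t \<approx> letter_inv l # t1" by blast
    then have "l # t \<approx> [] @ l # letter_inv l # t1" using comm_equiv_Cons by simp
    then show False using \<open>reduced (l # t)\<close> unfolding reduced_def by blast
  qed
qed (use Cons_no_cancel_pair in \<open>auto simp: reduced_def\<close>)

lemma not_reduced_append:
  "reduced u \<Longrightarrow> reduced v \<Longrightarrow> \<not> reduced (u @ v) \<Longrightarrow>
    \<exists>l u' v'. u \<approx> u' @ [l] \<and> v \<approx> letter_inv l # v'"
proof (induction u arbitrary: v rule: rev_induct)
  case (snoc m u0)
  have "reduced u0" using reduced_appendD snoc.prems(1) by blast
  show ?case
  proof (cases "reduced (m # v)")
    case False
    then obtain t1 where "v \<approx> letter_inv m # t1" using reduced_Cons_iff snoc.prems(2) by blast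
    then show ?thesis using comm_equiv_refl by blast
  next
    case True
    have "\<not> reduced (u0 @ (m # v))" using snoc.prems(3) by simp
    from snoc.IH[OF \<open>reduced u0\<close> True this] obtain l u' v' where
      u0: "u0 \<approx> u' @ [l]" and mv: "m # v \<approx> letter_inv l # v'" by blast
    show ?thesis
    proof (cases "letter_inv l = m")
      case True
      then have "u0 @ [m] \<approx> u' @ [l, letter_inv l]"
        using comm_equiv_append[OF u0 comm_equiv_refl] by force
      then show ?thesis
        using snoc.prems(1) unfolding reduced_def by (metis append_Nil2 append_assoc)
    next
      case False
      from comm_equiv_Cons_Cons[OF mv False[symmetric]] obtain r where
        adj: "E (fst m) (fst l)" and r: "v \<approx> letter_inv l # r" by auto
      have "u0 @ [m] \<approx> u' @ [l, m]" using comm_equiv_append[OF u0 comm_equiv_refl[of "[m]"]] by simp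
      moreover have "u' @ [l, m] \<approx> u' @ [m, l]"
        using comm_equiv_swap[of l m u' "[]"] adj E_sym by simp
      ultimately have "u0 @ [m] \<approx> (u' @ [m]) @ [l]" using comm_equiv_trans by simp
      then show ?thesis using r by blast
    qed
  qed
qed simp

text \<open>Letters act on reduced words modulo commutation by left multiplication with free
  cancellation. The action respects the defining relations of A_Gamma, which solves the
  word problem: equal elements have commutation-equivalent reduced representatives.\<close>

definition act_letter :: "'v \<times> bool \<Rightarrow> ('v \<times> bool) list \<Rightarrow> ('v \<times> bool) list" where
  "act_letter l t = (if \<exists>t1. t \<approx> letter_inv l # t1 then (SOME t1. t \<approx> letter_inv l # t1) else l # t)"

lemma act_letter_cancel: "t \<approx> letter_inv l # t1 \<Longrightarrow> t \<approx> letter_inv l # act_letter l t"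
  unfolding act_letter_def by (auto intro: someI)

lemma act_letter_cancel': "t \<approx> letter_inv l # t1 \<Longrightarrow> act_letter l t \<approx> t1"
  using act_letter_cancel comm_equiv_Cons_cancel comm_equiv_sym comm_equiv_trans by blast

lemma act_letter_prepend: "\<not> (\<exists>t1. t \<approx> letter_inv l # t1) \<Longrightarrow> act_letter l t = l # t"
  unfolding act_letter_def by auto

lemma act_letter_comm_equiv: "t \<approx> t' \<Longrightarrow> act_letter l t \<approx> act_letter l t'"
proof (cases "\<exists>t1. t \<approx> letter_inv l # t1")
  case True
  assume tt: "t \<approx> t'"
  from True obtain t1 where t1: "t \<approx> letter_inv l # t1" by blast
  then have "t' \<approx> letter_inv l # t1" using tt comm_equiv_sym comm_equiv_trans by blast
  then show ?thesis
    using act_letter_cancel'[OF t1] act_letter_cancel'[of t' l t1] comm_equiv_sym comm_equiv_trans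
    by blast
next
  case False
  assume tt: "t \<approx> t'"
  then have "\<not> (\<exists>t1. t' \<approx> letter_inv l # t1)" using False comm_equiv_trans by blast
  then show ?thesis using act_letter_prepend False tt comm_equiv_Cons by simp
qed

lemma reduced_act_letter: "reduced t \<Longrightarrow> reduced (act_letter l t)"
  by (metis act_letter_cancel act_letter_prepend reduced_ConsD reduced_Cons_iff reduced_comm_equiv)

lemma act_letter_inv: "reduced t \<Longrightarrow> act_letter (letter_inv l) (act_letter l t) \<approx> t"
proof (cases "\<exists>t1. t \<approx> letter_inv l # t1")
  case True
  assume red: "reduced t"
  have t: "t \<approx> letter_inv l # act_letter l t" using True act_letter_cancel by blast
  have "\<not> (\<exists>s. act_letter l t \<approx> letter_inv (letter_inv l) # s)"
  proof
    assume "\<exists>s. act_letter l t \<approx> letter_inv (letter_inv l) # s"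
    then obtain s where "act_letter l t \<approx> l # s" by auto
    then have "t \<approx> [] @ letter_inv l # letter_inv (letter_inv l) # s"
      using t comm_equiv_Cons comm_equiv_trans by auto
    then show False using red unfolding reduced_def by blast
  qed
  then show ?thesis using t comm_equiv_sym act_letter_prepend by metis
next
  case False
  then show ?thesis using act_letter_cancel'[of "l # t" "letter_inv l" t] act_letter_prepend by simp
qed

lemma act_letter_commute_half:
  assumes adj: "E (fst l) (fst m)" and tm: "t \<approx> letter_inv m # t1"
    and nl: "\<not> (\<exists>s. t \<approx> letter_inv l # s)"
  shows "act_letter l (act_letter m t) \<approx> act_letter m (act_letter l t)"
proof -
  have t: "t \<approx> letter_inv m # act_letter m t" using act_letter_cancel tm by blast
  have "\<not> (\<exists>s. act_letter m t \<approx> letter_inv l # s)"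
  proof
    assume "\<exists>s. act_letter m t \<approx> letter_inv l # s"
    then obtain s where "act_letter m t \<approx> letter_inv l # s" by blast
    then have "t \<approx> letter_inv m # letter_inv l # s" using t comm_equiv_Cons comm_equiv_trans by blast
    moreover have "letter_inv m # letter_inv l # s \<approx> letter_inv l # letter_inv m # s"
      using comm_equiv_swap_Cons adj E_sym by simp
    ultimately show False using nl comm_equiv_trans by blast
  qed
  then have lhs: "act_letter l (act_letter m t) = l # act_letter m t" by (rule act_letter_prepend)
  have "l # t \<approx> l # letter_inv m # act_letter m t" using t comm_equiv_Cons by blast
  moreover have "l # letter_inv m # act_letter m t \<approx> letter_inv m # l # act_letter m t"
    using comm_equiv_swap_Cons adj by simp
  ultimately have "l # t \<approx> letter_inv m # (l # act_letter m t)" using comm_equiv_trans by blast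
  then have "act_letter m (l # t) \<approx> l # act_letter m t" by (rule act_letter_cancel')
  then show ?thesis using lhs act_letter_prepend[OF nl] comm_equiv_sym by simp
qed

lemma act_letter_commute:
  assumes adj: "E (fst l) (fst m)"
  shows "act_letter l (act_letter m t) \<approx> act_letter m (act_letter l t)"
proof (cases "\<exists>s. t \<approx> letter_inv l # s")
  case l: True
  show ?thesis
  proof (cases "\<exists>s. t \<approx> letter_inv m # s")
    case True
    have tm: "t \<approx> letter_inv m # act_letter m t" using act_letter_cancel True by blast
    have tl: "t \<approx> letter_inv l # act_letter l t" using act_letter_cancel l by blast
    have "letter_inv m \<noteq> letter_inv l" using adj E_irrefl by (metis fst_letter_inv)
    from comm_equiv_Cons_Cons[OF _ this] tm tl comm_equiv_sym comm_equiv_trans obtain r where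
      "act_letter m t \<approx> letter_inv l # r" and "act_letter l t \<approx> letter_inv m # r" by blast
    then show ?thesis using act_letter_cancel' comm_equiv_sym comm_equiv_trans by blast
  next
    case False
    then show ?thesis
      using act_letter_commute_half[of m l] adj E_sym l comm_equiv_sym by blast
  qed
next
  case l: False
  show ?thesis
  proof (cases "\<exists>s. t \<approx> letter_inv m # s")
    case True
    then show ?thesis using act_letter_commute_half[OF adj _ l] by blast
  next
    case False
    have "m \<noteq> letter_inv l" "l \<noteq> letter_inv m" using adj E_irrefl by (metis fst_letter_inv)+
    then have "\<not> (\<exists>s. m # t \<approx> letter_inv l # s)" "\<not> (\<exists>s. l # t \<approx> letter_inv m # s)"
      using comm_equiv_Cons_Cons l False by blast+
    then show ?thesis
      using act_letter_prepend l False comm_equiv_swap_Cons adj by simp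
  qed
qed

definition act_word :: "('v \<times> bool) list \<Rightarrow> ('v \<times> bool) list \<Rightarrow> ('v \<times> bool) list" where
  "act_word w t = foldr act_letter w t"

lemma act_word_simps[simp]:
  "act_word [] t = t"
  "act_word (l # w) t = act_letter l (act_word w t)"
  "act_word (u @ w) t = act_word u (act_word w t)"
  by (simp_all add: act_word_def)

lemma reduced_act_word: "reduced t \<Longrightarrow> reduced (act_word w t)"
  by (induction w) (auto intro: reduced_act_letter)

lemma act_word_comm_equiv: "t \<approx> t' \<Longrightarrow> act_word w t \<approx> act_word w t'"
  by (induction w) (auto intro: act_letter_comm_equiv)

lemma act_word_reduced_Nil: "reduced w \<Longrightarrow> act_word w [] \<approx> w"
proof (induction w)
  case (Cons l w)
  have "reduced w" using Cons.prems reduced_ConsD by blast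
  then have "act_word (l # w) [] \<approx> act_letter l w" using act_letter_comm_equiv Cons.IH by simp
  moreover have "act_letter l w = l # w"
    using act_letter_prepend reduced_Cons_iff \<open>reduced w\<close> Cons.prems by blast
  ultimately show ?case by simp
qed simp

lemma commuting_proj_replicate:
  assumes "a @ z \<approx> z @ a" "\<not> E c d"
  obtains r m n where "proj c d a = concat (replicate m r)" "proj c d z = concat (replicate n r)"
proof -
  have "proj c d a @ proj c d z = proj c d z @ proj c d a"
    using comm_equiv_proj[OF assms] by simp
  then show ?thesis using that comm_append_are_replicate by metis
qed

lemma commuting_occ_cross:
  assumes "a @ z \<approx> z @ a" "\<not> E c d"
  shows "occ c z * occ d a = occ d z * occ c a"
proof -
  obtain r m n where r: "proj c d a = concat (replicate m r)" "proj c d z = concat (replicate n r)"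
    using commuting_proj_replicate[OF assms] .
  have "occ c a = m * occ c r" "occ c z = n * occ c r" "occ d a = m * occ d r" "occ d z = n * occ d r"
    using occ_proj[of c c d] occ_proj[of d c d] r occ_concat_replicate by metis+
  then show ?thesis by simp
qed

text \<open>A vertex adjacent to x is not adjacent to y, so its ratio is compared with that
  of x through y.\<close>

lemma commuting_occ_proportional:
  assumes comm: "a @ z \<approx> z @ a" and "y \<in> supp a" and "dist_ge_3 E x y"
  shows "occ s z * occ x a = occ x z * occ s a"
proof (cases "E s x")
  case False
  then show ?thesis using commuting_occ_cross[OF comm False] by simp
next
  case True
  have "\<not> E s y" "\<not> E y x" using True \<open>dist_ge_3 E x y\<close> E_sym unfolding dist_ge_3_def by blast+
  have "0 < occ y a" using \<open>y \<in> supp a\<close> by (rule occ_pos)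
  have "(occ s z * occ x a) * occ y a = (occ s z * occ y a) * occ x a" by simp
  also have "\<dots> = (occ y z * occ x a) * occ s a"
    using commuting_occ_cross[OF comm \<open>\<not> E s y\<close>] by simp
  also have "\<dots> = (occ x z * occ s a) * occ y a"
    using commuting_occ_cross[OF comm \<open>\<not> E y x\<close>] by simp
  finally show ?thesis using \<open>0 < occ y a\<close> by simp
qed

lemma commuting_word_pow:
  assumes comm: "a @ z \<approx> z @ a" and "x \<in> supp a" "y \<in> supp a" and "dist_ge_3 E x y"
  shows "word_pow (occ x z) a \<approx> word_pow (occ x a) z"
  unfolding comm_equiv_iff_proj
proof (intro allI impI)
  fix c d assume "\<not> E c d"
  obtain r m n where r: "proj c d a = concat (replicate m r)" "proj c d z = concat (replicate n r)"
    using commuting_proj_replicate[OF comm \<open>\<not> E c d\<close>] .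
  have "r = [] \<or> occ x z * m = occ x a * n"
  proof (cases "r = [] \<or> m = 0 \<and> n = 0")
    case False
    then obtain l where "l \<in> set r" "m > 0 \<or> n > 0" by (cases r) auto
    then have "l \<in> set (proj c d a) \<union> set (proj c d z)" using r by auto
    then have e: "fst l = c \<or> fst l = d" by (auto simp: proj_def)
    have "0 < occ (fst l) r" using \<open>l \<in> set r\<close> by (intro occ_pos) auto
    have "occ (fst l) a = m * occ (fst l) r" "occ (fst l) z = n * occ (fst l) r"
      using occ_proj[OF e] r occ_concat_replicate by metis+
    moreover have "occ (fst l) z * occ x a = occ x z * occ (fst l) a"
      using commuting_occ_proportional[OF comm \<open>y \<in> supp a\<close> \<open>dist_ge_3 E x y\<close>] .
    ultimately have "(occ x z * m) * occ (fst l) r = (occ x a * n) * occ (fst l) r"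
      by (metis mult.assoc mult.commute)
    then show ?thesis using \<open>0 < occ (fst l) r\<close> by simp
  qed auto
  then show "proj c d (word_pow (occ x z) a) = proj c d (word_pow (occ x a) z)"
    unfolding word_pow_def proj_concat_replicate r concat_replicate_mult by auto
qed

definition cyc_reduced :: "('v \<times> bool) list \<Rightarrow> bool" where
  "cyc_reduced w \<longleftrightarrow> reduced w \<and> \<not> (\<exists>l m. w \<approx> l # m @ [letter_inv l])"

lemma reduced_word_pow: "cyc_reduced w \<Longrightarrow> reduced (word_pow n w)"
proof (induction n)
  case (Suc n)
  have "reduced w" using Suc.prems unfolding cyc_reduced_def by blast
  show ?case
  proof (rule ccontr)
    assume "\<not> reduced (word_pow (Suc n) w)"
    then have "\<not> reduced (word_pow n w @ w)" by (simp add: word_pow_snoc)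
    from not_reduced_append[OF Suc.IH[OF Suc.prems] \<open>reduced w\<close> this] obtain l u' v' where
      A: "word_pow n w \<approx> u' @ [l]" and B: "w \<approx> letter_inv l # v'" by blast
    obtain k where n: "n = Suc k" using comm_equiv_length[OF A] by (cases n) auto
    have "word_pow k w @ w \<approx> u' @ [l]" using A n word_pow_snoc[of k w] by simp
    then have "rev w @ rev (word_pow k w) \<approx> l # rev u'"
      using comm_equiv_rev_iff[symmetric] by fastforce
    moreover have "\<exists>m\<in>set (rev w). fst m = fst l"
      using comm_equiv_set[OF B] by (rule_tac x="letter_inv l" in bexI) auto
    ultimately obtain A' where "rev w \<approx> l # A'" using comm_equiv_head_of_prefix by blast
    then have wA: "w \<approx> rev A' @ [l]" using comm_equiv_rev_iff[of w "rev A' @ [l]"] by simp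
    then have "l \<in> set w" using comm_equiv_set by simp
    then have "l \<in> set v'" using comm_equiv_set[OF B] by auto
    have "letter_inv l # v' \<approx> rev A' @ [l]" using B wA comm_equiv_sym comm_equiv_trans by blast
    then have "rev v' @ [letter_inv l] \<approx> l # A'" using comm_equiv_rev_iff[symmetric] by fastforce
    moreover have "\<exists>m\<in>set (rev v'). fst m = fst l" using \<open>l \<in> set v'\<close> by auto
    ultimately obtain B' where "rev v' \<approx> l # B'" using comm_equiv_head_of_prefix by blast
    then have "v' \<approx> rev B' @ [l]" using comm_equiv_rev_iff[of v' "rev B' @ [l]"] by simp
    then have "w \<approx> letter_inv l # rev B' @ [letter_inv (letter_inv l)]"
      using B comm_equiv_Cons comm_equiv_trans by fastforce
    then show False using Suc.prems unfolding cyc_reduced_def by blast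
  qed
qed simp

end

section \<open>The group A_Gamma and its word problem\<close>

lemma (in group) conj_mult:
  "h \<in> carrier G \<Longrightarrow> x \<in> carrier G \<Longrightarrow> y \<in> carrier G \<Longrightarrow>
    (inv h \<otimes> x \<otimes> h) \<otimes> (inv h \<otimes> y \<otimes> h) = inv h \<otimes> (x \<otimes> y) \<otimes> h"
  by (simp add: m_assoc[symmetric]) (simp add: m_assoc)

lemma (in group) conj_pow:
  "h \<in> carrier G \<Longrightarrow> x \<in> carrier G \<Longrightarrow> (inv h \<otimes> x \<otimes> h) [^] (n::nat) = inv h \<otimes> x [^] n \<otimes> h"
proof (induction n)
  case 0
  then show ?case by (simp add: m_assoc)
next
  case (Suc n)
  then show ?case using conj_mult by simp
qed

lemma (in group) conj_conj:
  "h \<in> carrier G \<Longrightarrow> k \<in> carrier G \<Longrightarrow> x \<in> carrier G \<Longrightarrow>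
    inv k \<otimes> (inv h \<otimes> x \<otimes> h) \<otimes> k = inv (h \<otimes> k) \<otimes> x \<otimes> (h \<otimes> k)"
  by (simp add: m_assoc inv_mult_group)

lemma (in group) conj_inv_cancel:
  "h \<in> carrier G \<Longrightarrow> x \<in> carrier G \<Longrightarrow> h \<otimes> (inv h \<otimes> x \<otimes> h) \<otimes> inv h = x"
  by (simp add: m_assoc[symmetric]) (simp add: m_assoc)

lemma (in group) conj_hom:
  assumes "f \<in> hom H G" "h \<in> carrier G"
  shows "(\<lambda>x. inv h \<otimes> f x \<otimes> h) \<in> hom H G"
  using assms by (auto simp: hom_def Pi_iff conj_mult)

lemma (in group) inj_on_conj:
  assumes "inj_on f A" "f ` A \<subseteq> carrier G" "h \<in> carrier G"
  shows "inj_on (\<lambda>x. inv h \<otimes> f x \<otimes> h) A"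
  using assms by (auto simp: inj_on_def image_subset_iff)

locale raag_graph = commutation_graph E for E :: "'v \<Rightarrow> 'v \<Rightarrow> bool" +
  fixes V :: "'v set"
  assumes E_in_V: "E a b \<Longrightarrow> a \<in> V \<and> b \<in> V"
begin

abbreviation W where "W \<equiv> raag_words V"
abbreviation R where "R \<equiv> raag_rel V E"
abbreviation G where "G \<equiv> raag V E"

lemma words_append[simp]: "u @ v \<in> W \<longleftrightarrow> u \<in> W \<and> v \<in> W"
  unfolding raag_words_def by auto

lemma words_Cons[simp]: "l # v \<in> W \<longleftrightarrow> fst l \<in> V \<and> v \<in> W"
  unfolding raag_words_def by (cases l) auto

lemma words_Nil[simp]: "[] \<in> W"
  unfolding raag_words_def by auto

lemma raag_step_cases:
  assumes "(u, v) \<in> raag_step V E"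
  obtains (cancel) xs ys a s where "u = xs @ [(a, s), (a, \<not> s)] @ ys" "v = xs @ ys" "u \<in> W"
  | (swap) xs ys a s c t where "u = xs @ [(a, s), (c, t)] @ ys" "v = xs @ [(c, t), (a, s)] @ ys"
      "E a c" "u \<in> W"
  using assms unfolding raag_step_def Un_iff mem_Collect_eq
  by (elim disjE exE conjE; simp only: prod.inject; elim conjE)

lemma raag_step_cancel:
  "xs @ [(a, s), (a, \<not> s)] @ ys \<in> W \<Longrightarrow> (xs @ [(a, s), (a, \<not> s)] @ ys, xs @ ys) \<in> raag_step V E"
  unfolding raag_step_def by (rule UnI1, rule CollectI, intro exI conjI) auto

lemma raag_step_swap:
  "E a c \<Longrightarrow> xs @ [(a, s), (c, t)] @ ys \<in> W \<Longrightarrow>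
    (xs @ [(a, s), (c, t)] @ ys, xs @ [(c, t), (a, s)] @ ys) \<in> raag_step V E"
  unfolding raag_step_def by (rule UnI2, rule CollectI, intro exI conjI) auto

lemma raag_step_words: "(u, v) \<in> raag_step V E \<Longrightarrow> u \<in> W \<and> v \<in> W"
  by (erule raag_step_cases) auto

lemma raag_step_append:
  assumes "(u, v) \<in> raag_step V E" "x \<in> W" "y \<in> W"
  shows "(x @ u @ y, x @ v @ y) \<in> raag_step V E"
  using assms(1)
proof (cases rule: raag_step_cases)
  case (cancel xs ys a s)
  then show ?thesis using assms(2,3) raag_step_cancel[of "x @ xs" a s "ys @ y"] by simp
next
  case (swap xs ys a s c t)
  then show ?thesis using assms(2,3) raag_step_swap[of a c "x @ xs" s t "ys @ y"] by simp
qed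

lemma raag_rel_step: "(u, v) \<in> raag_step V E \<Longrightarrow> (u, v) \<in> R"
  unfolding raag_rel_def by (rule UnI2, rule r_into_trancl, rule UnI1)

lemma raag_rel_refl: "u \<in> W \<Longrightarrow> (u, u) \<in> R"
  unfolding raag_rel_def by auto

lemma raag_rel_sym: "(u, v) \<in> R \<Longrightarrow> (v, u) \<in> R"
proof -
  let ?S = "raag_step V E \<union> (raag_step V E)\<inverse>"
  have "?S\<inverse> = ?S" by auto
  then have "((?S)\<^sup>+)\<inverse> = ?S\<^sup>+" by (metis trancl_converse)
  then show "(u, v) \<in> R \<Longrightarrow> (v, u) \<in> R" unfolding raag_rel_def by blast
qed

lemma raag_rel_trans: "(u, v) \<in> R \<Longrightarrow> (v, w) \<in> R \<Longrightarrow> (u, w) \<in> R"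
  unfolding raag_rel_def by (auto intro: trancl_trans)

lemma raag_rel_induct[consumes 1, case_names refl step sym trans]:
  assumes "(u, v) \<in> R"
    and refl: "\<And>u. u \<in> W \<Longrightarrow> P u u"
    and step: "\<And>u v. (u, v) \<in> raag_step V E \<Longrightarrow> P u v"
    and sym: "\<And>u v. P u v \<Longrightarrow> P v u"
    and trans: "\<And>u v w. P u v \<Longrightarrow> P v w \<Longrightarrow> P u w"
  shows "P u v"
proof -
  have P_step: "P u v" if "(u, v) \<in> raag_step V E \<union> (raag_step V E)\<inverse>" for u v
    using that step sym by blast
  from assms(1) consider "(u, v) \<in> Id_on W" | "(u, v) \<in> (raag_step V E \<union> (raag_step V E)\<inverse>)\<^sup>+"
    unfolding raag_rel_def by blast
  then show ?thesis
  proof cases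
    case 1
    then show ?thesis using refl by (auto simp: Id_on_iff)
  next
    case 2
    then show ?thesis by (induction rule: trancl_induct) (use P_step trans in blast)+
  qed
qed

lemma raag_rel_words: "(u, v) \<in> R \<Longrightarrow> u \<in> W \<and> v \<in> W"
  by (induction rule: raag_rel_induct) (auto dest: raag_step_words)

lemma raag_rel_equiv: "equiv W R"
proof (rule equivI)
  show "R \<subseteq> W \<times> W" using raag_rel_words by auto
  show "refl_on W R" by (rule refl_onI) (auto intro: raag_rel_refl dest: raag_rel_words)
  show "sym R" by (rule symI) (rule raag_rel_sym)
  show "trans R" by (rule transI) (rule raag_rel_trans)
qed

lemma raag_rel_append_context:
  assumes "(u, v) \<in> R" "x \<in> W" "y \<in> W"
  shows "(x @ u @ y, x @ v @ y) \<in> R"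
  using assms(1)
proof (induction rule: raag_rel_induct)
  case (refl u)
  then show ?case using assms(2,3) by (simp add: raag_rel_refl)
next
  case (step u v)
  then show ?case using assms(2,3) by (intro raag_rel_step raag_step_append)
qed (auto intro: raag_rel_sym raag_rel_trans)

lemma raag_rel_append:
  assumes "(u, v) \<in> R" "(u', v') \<in> R"
  shows "(u @ u', v @ v') \<in> R"
proof -
  have "u' \<in> W" "v \<in> W" using raag_rel_words assms by blast+
  have "([] @ u @ u', [] @ v @ u') \<in> R"
    using raag_rel_append_context[OF assms(1) words_Nil \<open>u' \<in> W\<close>] .
  moreover have "(v @ u' @ [], v @ v' @ []) \<in> R"
    using raag_rel_append_context[OF assms(2) \<open>v \<in> W\<close> words_Nil] .
  ultimately show ?thesis using raag_rel_trans by simp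
qed

definition word_inv :: "('v \<times> bool) list \<Rightarrow> ('v \<times> bool) list" where
  "word_inv w = rev (map letter_inv w)"

lemma word_inv_simps[simp]:
  "word_inv [] = []"
  "word_inv (l # w) = word_inv w @ [letter_inv l]"
  "word_inv (u @ w) = word_inv w @ word_inv u"
  "length (word_inv w) = length w"
  "word_inv (word_inv w) = w"
  by (simp_all add: word_inv_def rev_map comp_def)

lemma word_inv_words[simp]: "word_inv w \<in> W \<longleftrightarrow> w \<in> W"
  by (induction w) auto

lemma raag_rel_cancel_pair: "fst l \<in> V \<Longrightarrow> ([l, letter_inv l], []) \<in> R"
proof -
  assume "fst l \<in> V"
  then have "([] @ [(fst l, snd l), (fst l, \<not> snd l)] @ [], [] @ []) \<in> raag_step V E"
    by (intro raag_step_cancel) simp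
  then show ?thesis using raag_rel_step by (simp add: letter_inv_def)
qed

lemma raag_rel_word_inv: "w \<in> W \<Longrightarrow> (w @ word_inv w, []) \<in> R \<and> (word_inv w @ w, []) \<in> R"
proof (induction w)
  case (Cons l w)
  have l: "fst l \<in> V" "[l] \<in> W" "[letter_inv l] \<in> W" and w: "w \<in> W"
    using Cons.prems by auto
  have "([l] @ (w @ word_inv w) @ [letter_inv l], [l] @ [] @ [letter_inv l]) \<in> R"
    using raag_rel_append_context[OF conjunct1[OF Cons.IH[OF w]] l(2,3)] .
  then have "((l # w) @ word_inv (l # w), []) \<in> R"
    using raag_rel_cancel_pair[OF l(1)] raag_rel_trans by simp
  moreover have "(word_inv w @ [letter_inv l, letter_inv (letter_inv l)] @ w, word_inv w @ [] @ w) \<in> R"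
    using raag_rel_append_context[OF raag_rel_cancel_pair[of "letter_inv l"], of "word_inv w" w] l w
    by simp
  then have "(word_inv (l # w) @ (l # w), []) \<in> R"
    using Cons.IH[OF w] raag_rel_trans by simp
  ultimately show ?case by simp
qed (simp add: raag_rel_refl)

lemma raag_rel_comm_equiv: "s \<approx> t \<Longrightarrow> s \<in> W \<Longrightarrow> (s, t) \<in> R"
  unfolding comm_equiv_def
proof (induction rule: rtranclp_induct)
  case (step y z)
  then have sy: "(s, y) \<in> R" by blast
  then have "y \<in> W" using raag_rel_words by blast
  from \<open>comm_step E y z\<close> obtain p q a b where
    ab: "E (fst a) (fst b)" "y = p @ a # b # q" "z = p @ b # a # q"
    unfolding comm_step_def by blast
  have "(y, z) \<in> R"
    using ab \<open>y \<in> W\<close> raag_step_swap[of "fst a" "fst b" p "snd a" "snd b" q] raag_rel_step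
    by simp
  then show ?case using sy raag_rel_trans by blast
qed (rule raag_rel_refl)

lemma raag_rel_not_reduced:
  "s \<approx> p @ l # letter_inv l # q \<Longrightarrow> s \<in> W \<Longrightarrow> (s, p @ q) \<in> R"
proof -
  assume "s \<approx> p @ l # letter_inv l # q" "s \<in> W"
  then have r: "(s, p @ [l, letter_inv l] @ q) \<in> R" using raag_rel_comm_equiv by simp
  then have "p @ [l, letter_inv l] @ q \<in> W" using raag_rel_words by blast
  then have "fst l \<in> V" "p \<in> W" "q \<in> W" by auto
  then have "(p @ [l, letter_inv l] @ q, p @ [] @ q) \<in> R"
    using raag_rel_append_context raag_rel_cancel_pair by blast
  then show ?thesis using r raag_rel_trans by simp
qed

lemma act_word_step:
  assumes "(u, u') \<in> raag_step V E" "reduced t"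
  shows "act_word u t \<approx> act_word u' t"
  using assms(1)
proof (cases rule: raag_step_cases)
  case (cancel xs ys a s)
  have "act_letter (letter_inv (a, \<not> s)) (act_letter (a, \<not> s) (act_word ys t)) \<approx> act_word ys t"
    using act_letter_inv reduced_act_word assms(2) by blast
  then show ?thesis using cancel(1,2) act_word_comm_equiv by (simp add: letter_inv_def)
next
  case (swap xs ys a s c b)
  then show ?thesis using act_letter_commute act_word_comm_equiv by simp
qed

theorem reduced_word_problem: "(u, v) \<in> R \<Longrightarrow> reduced u \<Longrightarrow> reduced v \<Longrightarrow> u \<approx> v"
proof -
  assume "(u, v) \<in> R" "reduced u" "reduced v"
  have "act_word u [] \<approx> act_word v []" using \<open>(u, v) \<in> R\<close>
  proof (induction rule: raag_rel_induct)
    case (step u v)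
    then show ?case using act_word_step reduced_Nil by blast
  qed (auto intro: comm_equiv_sym comm_equiv_trans)
  then show ?thesis using act_word_reduced_Nil \<open>reduced u\<close> \<open>reduced v\<close>
    comm_equiv_sym comm_equiv_trans by meson
qed

definition elem :: "('v \<times> bool) list \<Rightarrow> ('v \<times> bool) list set" where
  "elem w = R `` {w}"

lemma mem_elem_iff: "v \<in> elem w \<longleftrightarrow> (w, v) \<in> R"
  unfolding elem_def by simp

lemma mem_elem_self: "w \<in> W \<Longrightarrow> w \<in> elem w"
  unfolding mem_elem_iff by (rule raag_rel_refl)

lemma elem_eq: "(u, v) \<in> R \<Longrightarrow> elem u = elem v"
  unfolding elem_def using equiv_class_eq[OF raag_rel_equiv] by blast

lemma elem_eqD: "elem u = elem v \<Longrightarrow> u \<in> W \<Longrightarrow> (u, v) \<in> R"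
proof -
  assume "elem u = elem v" "u \<in> W"
  then have "u \<in> elem v" using mem_elem_self by blast
  then show ?thesis unfolding mem_elem_iff by (rule raag_rel_sym)
qed

lemma raag_gen_eq: "raag_gen V E v = elem [(v, True)]"
  unfolding raag_gen_def elem_def ..

lemma carrier_raag: "carrier G = W // R"
  unfolding raag_def by simp

lemma elem_in_carrier: "w \<in> W \<Longrightarrow> elem w \<in> carrier G"
  unfolding carrier_raag elem_def by (rule quotientI)

lemma carrier_raagE:
  assumes "X \<in> carrier G"
  obtains w where "w \<in> W" "X = elem w"
  using assms unfolding carrier_raag elem_def by (blast elim: quotientE)

lemma carrier_eq_elem: "X \<in> carrier G \<Longrightarrow> w \<in> X \<Longrightarrow> X = elem w"
proof (elim carrier_raagE)
  fix u assume "w \<in> X" "X = elem u"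
  then have "(u, w) \<in> R" by (simp add: mem_elem_iff)
  then show "X = elem w" using \<open>X = elem u\<close> elem_eq by simp
qed

lemma carrier_words: "X \<in> carrier G \<Longrightarrow> w \<in> X \<Longrightarrow> w \<in> W"
proof (elim carrier_raagE)
  fix u assume "w \<in> X" "X = elem u"
  then have "(u, w) \<in> R" by (simp add: mem_elem_iff)
  then show "w \<in> W" using raag_rel_words by blast
qed

lemma mult_elem: "u \<in> W \<Longrightarrow> v \<in> W \<Longrightarrow> elem u \<otimes>\<^bsub>G\<^esub> elem v = elem (u @ v)"
proof -
  assume "u \<in> W" "v \<in> W"
  then have "(SOME x. x \<in> elem u) \<in> elem u" "(SOME x. x \<in> elem v) \<in> elem v"
    by (meson mem_elem_self someI)+
  then have "(u @ v, (SOME x. x \<in> elem u) @ (SOME x. x \<in> elem v)) \<in> R"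
    using raag_rel_append unfolding mem_elem_iff by blast
  then have "elem ((SOME x. x \<in> elem u) @ (SOME x. x \<in> elem v)) = elem (u @ v)"
    by (rule elem_eq[symmetric])
  then show ?thesis unfolding raag_def by (simp add: elem_def)
qed

lemma one_raag: "\<one>\<^bsub>G\<^esub> = elem []"
  unfolding raag_def elem_def by simp

lemma group_raag: "group G"
proof (rule groupI)
  fix x y assume "x \<in> carrier G" "y \<in> carrier G"
  then show "x \<otimes>\<^bsub>G\<^esub> y \<in> carrier G"
    by (elim carrier_raagE) (simp add: mult_elem elem_in_carrier)
next
  show "\<one>\<^bsub>G\<^esub> \<in> carrier G" using one_raag elem_in_carrier by simp
next
  fix x y z assume "x \<in> carrier G" "y \<in> carrier G" "z \<in> carrier G"
  then show "x \<otimes>\<^bsub>G\<^esub> y \<otimes>\<^bsub>G\<^esub> z = x \<otimes>\<^bsub>G\<^esub> (y \<otimes>\<^bsub>G\<^esub> z)"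
    by (elim carrier_raagE) (simp add: mult_elem)
next
  fix x assume "x \<in> carrier G"
  then show "\<one>\<^bsub>G\<^esub> \<otimes>\<^bsub>G\<^esub> x = x"
    by (elim carrier_raagE) (simp add: mult_elem one_raag)
next
  fix x assume "x \<in> carrier G"
  then obtain u where u: "u \<in> W" "x = elem u" by (rule carrier_raagE)
  have "elem (word_inv u) \<otimes>\<^bsub>G\<^esub> x = elem (word_inv u @ u)" using mult_elem u by simp
  also have "\<dots> = \<one>\<^bsub>G\<^esub>" using raag_rel_word_inv[OF u(1)] elem_eq one_raag by blast
  finally show "\<exists>y\<in>carrier G. y \<otimes>\<^bsub>G\<^esub> x = \<one>\<^bsub>G\<^esub>" using elem_in_carrier u by auto
qed

sublocale raag: group G
  by (rule group_raag)

lemma inv_elem: "w \<in> W \<Longrightarrow> inv\<^bsub>G\<^esub> (elem w) = elem (word_inv w)"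
proof -
  assume w: "w \<in> W"
  have "elem (word_inv w) \<otimes>\<^bsub>G\<^esub> elem w = \<one>\<^bsub>G\<^esub>"
    using mult_elem w raag_rel_word_inv[OF w] elem_eq one_raag by simp
  then show ?thesis using raag.inv_equality elem_in_carrier w by simp
qed

lemma word_pow_words[simp]: "w \<in> W \<Longrightarrow> word_pow n w \<in> W"
  by (induction n) auto

lemma pow_elem: "w \<in> W \<Longrightarrow> elem w [^]\<^bsub>G\<^esub> n = elem (word_pow n w)"
  by (induction n) (simp_all add: one_raag mult_elem word_pow_snoc)

definition word_length :: "('v \<times> bool) list set \<Rightarrow> nat" where
  "word_length X = (LEAST n. \<exists>w\<in>X. length w = n)"

lemma word_length_le: "w \<in> X \<Longrightarrow> word_length X \<le> length w"
  unfolding word_length_def by (rule Least_le) blast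

lemma word_length_attained: "w \<in> X \<Longrightarrow> \<exists>w'\<in>X. length w' = word_length X"
  unfolding word_length_def by (rule LeastI_ex) blast

lemma not_reduced_shorter:
  assumes "w \<in> W" "\<not> reduced w"
  obtains w' where "(w, w') \<in> R" "length w' + 2 = length w"
proof -
  from assms(2) obtain p l q where "w \<approx> p @ l # letter_inv l # q" unfolding reduced_def by blast
  then have "(w, p @ q) \<in> R" "length w = length (p @ l # letter_inv l # q)"
    using raag_rel_not_reduced assms(1) comm_equiv_length by blast+
  then show ?thesis using that by simp
qed

lemma word_length_not_reduced:
  assumes "w \<in> W" "\<not> reduced w"
  shows "word_length (elem w) + 2 \<le> length w"
proof -
  obtain w' where w': "(w, w') \<in> R" "length w' + 2 = length w"
    using not_reduced_shorter assms by blast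
  then have "word_length (elem w) \<le> length w'" using word_length_le mem_elem_iff by blast
  then show ?thesis using w' by simp
qed

lemma reduced_if_shortest:
  assumes "X \<in> carrier G" "w \<in> X" "\<forall>w'\<in>X. length w \<le> length w'"
  shows "reduced w"
proof (rule ccontr)
  assume "\<not> reduced w"
  moreover have "w \<in> W" using carrier_words assms(1,2) .
  ultimately obtain w' where w': "(w, w') \<in> R" "length w' + 2 = length w"
    using not_reduced_shorter by blast
  have "w' \<in> X" using w'(1) carrier_eq_elem[OF assms(1,2)] mem_elem_iff by simp
  then show False using assms(3) w'(2) by fastforce
qed

lemma shortest_reduced_rep:
  assumes "X \<in> carrier G"
  obtains w where "w \<in> X" "reduced w" "length w = word_length X"
proof -
  obtain u where "u \<in> W" "X = elem u" using assms by (rule carrier_raagE)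
  then have "u \<in> X" using mem_elem_self by simp
  then obtain w where w: "w \<in> X" "length w = word_length X"
    using word_length_attained by blast
  then have "\<forall>w'\<in>X. length w \<le> length w'" using word_length_le by simp
  then show ?thesis using that w reduced_if_shortest assms by blast
qed

lemma word_length_reduced: "w \<in> W \<Longrightarrow> reduced w \<Longrightarrow> word_length (elem w) = length w"
proof -
  assume w: "w \<in> W" "reduced w"
  obtain w0 where w0: "w0 \<in> elem w" "reduced w0" "length w0 = word_length (elem w)"
    using shortest_reduced_rep elem_in_carrier w(1) by blast
  have "w \<approx> w0" using reduced_word_problem w0 w unfolding mem_elem_iff by blast
  then show ?thesis using comm_equiv_length w0 by simp
qed

lemma word_length_mult:
  assumes "X \<in> carrier G" "Y \<in> carrier G"
  shows "word_length (X \<otimes>\<^bsub>G\<^esub> Y) \<le> word_length X + word_length Y"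
proof -
  obtain u where u: "u \<in> X" "length u = word_length X"
    using shortest_reduced_rep assms(1) by blast
  obtain v where v: "v \<in> Y" "length v = word_length Y"
    using shortest_reduced_rep assms(2) by blast
  have "u \<in> W" "v \<in> W" using carrier_words assms u v by blast+
  have "X = elem u" "Y = elem v" using carrier_eq_elem assms u v by blast+
  then have "X \<otimes>\<^bsub>G\<^esub> Y = elem (u @ v)" using mult_elem \<open>u \<in> W\<close> \<open>v \<in> W\<close> by simp
  moreover have "word_length (elem (u @ v)) \<le> length (u @ v)"
    by (rule word_length_le, rule mem_elem_self) (simp add: \<open>u \<in> W\<close> \<open>v \<in> W\<close>)
  ultimately show ?thesis using u v by simp
qed

lemma word_length_inv:
  assumes "X \<in> carrier G"
  shows "word_length (inv\<^bsub>G\<^esub> X) \<le> word_length X"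
proof -
  obtain u where u: "u \<in> X" "length u = word_length X"
    using shortest_reduced_rep assms by blast
  have "u \<in> W" using carrier_words assms u by blast
  have "X = elem u" using carrier_eq_elem assms u by blast
  then have "inv\<^bsub>G\<^esub> X = elem (word_inv u)" using inv_elem \<open>u \<in> W\<close> by simp
  moreover have "word_length (elem (word_inv u)) \<le> length (word_inv u)"
    by (rule word_length_le, rule mem_elem_self) (simp add: \<open>u \<in> W\<close>)
  ultimately show ?thesis using u by simp
qed

section \<open>Centralizers and essential supports\<close>

lemma word_length_mult_pow_ge:
  assumes "w \<in> W" "cyc_reduced w" "b \<in> carrier G"
  shows "N * length w \<le> word_length b + word_length (b \<otimes>\<^bsub>G\<^esub> elem w [^]\<^bsub>G\<^esub> (N::nat))"
proof -
  let ?a = "elem w"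
  have a: "?a \<in> carrier G" using elem_in_carrier assms(1) .
  have "?a [^]\<^bsub>G\<^esub> N = inv\<^bsub>G\<^esub> b \<otimes>\<^bsub>G\<^esub> (b \<otimes>\<^bsub>G\<^esub> ?a [^]\<^bsub>G\<^esub> N)"
    using a assms(3) by (simp add: raag.m_assoc[symmetric])
  then have "word_length (?a [^]\<^bsub>G\<^esub> N)
      \<le> word_length (inv\<^bsub>G\<^esub> b) + word_length (b \<otimes>\<^bsub>G\<^esub> ?a [^]\<^bsub>G\<^esub> N)"
    using word_length_mult[of "inv\<^bsub>G\<^esub> b" "b \<otimes>\<^bsub>G\<^esub> ?a [^]\<^bsub>G\<^esub> N"] a assms(3)
    by simp
  moreover have "word_length (?a [^]\<^bsub>G\<^esub> N) = N * length w"
    using pow_elem word_length_reduced reduced_word_pow assms(1,2) by simp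
  ultimately show ?thesis using word_length_inv[OF assms(3)] by simp
qed

text \<open>Otherwise every step from b w^N to b w^(N+1) would cancel a letter, so the length
  would grow by at most |w| - 2 per step, whereas word_length_mult_pow_ge forces
  growth N |w|.\<close>

lemma reduced_append_after_power:
  assumes "w \<in> W" "cyc_reduced w" "b \<in> carrier G"
  obtains N z where "b \<otimes>\<^bsub>G\<^esub> elem w [^]\<^bsub>G\<^esub> (N::nat) = elem z" "z \<in> W" "reduced z" "reduced (z @ w)"
proof -
  let ?a = "elem w"
  have a: "?a \<in> carrier G" using elem_in_carrier assms(1) .
  have "\<exists>N z. b \<otimes>\<^bsub>G\<^esub> ?a [^]\<^bsub>G\<^esub> (N::nat) = elem z \<and> z \<in> W \<and> reduced z \<and> reduced (z @ w)"
  proof (rule ccontr)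
    assume none: "\<not> ?thesis"
    have upper: "word_length (b \<otimes>\<^bsub>G\<^esub> ?a [^]\<^bsub>G\<^esub> N) + N \<le> word_length b + N * length w"
      for N :: nat
    proof (induction N)
      case (Suc N)
      have bN: "b \<otimes>\<^bsub>G\<^esub> ?a [^]\<^bsub>G\<^esub> N \<in> carrier G" using a assms(3) by simp
      obtain z where z: "z \<in> b \<otimes>\<^bsub>G\<^esub> ?a [^]\<^bsub>G\<^esub> N" "reduced z"
        "length z = word_length (b \<otimes>\<^bsub>G\<^esub> ?a [^]\<^bsub>G\<^esub> N)"
        using shortest_reduced_rep[OF bN] by blast
      have "z \<in> W" "b \<otimes>\<^bsub>G\<^esub> ?a [^]\<^bsub>G\<^esub> N = elem z"
        using carrier_words carrier_eq_elem bN z(1) by blast+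
      then have "\<not> reduced (z @ w)" using none z(2) by blast
      have "b \<otimes>\<^bsub>G\<^esub> ?a [^]\<^bsub>G\<^esub> Suc N = (b \<otimes>\<^bsub>G\<^esub> ?a [^]\<^bsub>G\<^esub> N) \<otimes>\<^bsub>G\<^esub> ?a"
        using a assms(3) by (simp add: raag.m_assoc)
      also have "\<dots> = elem (z @ w)"
        using \<open>b \<otimes>\<^bsub>G\<^esub> ?a [^]\<^bsub>G\<^esub> N = elem z\<close> mult_elem \<open>z \<in> W\<close> assms(1) by simp
      finally have eq: "b \<otimes>\<^bsub>G\<^esub> ?a [^]\<^bsub>G\<^esub> Suc N = elem (z @ w)" .
      have "word_length (b \<otimes>\<^bsub>G\<^esub> ?a [^]\<^bsub>G\<^esub> Suc N) + 2 \<le> length z + length w"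
        unfolding eq using word_length_not_reduced[of "z @ w"] \<open>z \<in> W\<close> assms(1)
          \<open>\<not> reduced (z @ w)\<close> by simp
      then show ?case using Suc.IH z(3) by simp
    qed (use assms(3) in simp)
    show False
      using upper[of "2 * word_length b + 1"] word_length_mult_pow_ge[OF assms, of "2 * word_length b + 1"]
      by simp
  qed
  then show ?thesis using that by blast
qed

lemma comm_equiv_if_elems_commute:
  assumes "w \<in> W" "z \<in> W" "reduced (z @ w)"
    and "elem w \<otimes>\<^bsub>G\<^esub> elem z = elem z \<otimes>\<^bsub>G\<^esub> elem w"
  shows "w @ z \<approx> z @ w"
proof -
  have eq: "elem (w @ z) = elem (z @ w)" using assms mult_elem by simp
  have "reduced (w @ z)"
  proof (rule ccontr)
    assume "\<not> reduced (w @ z)"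
    then have "word_length (elem (w @ z)) + 2 \<le> length (w @ z)"
      using word_length_not_reduced[of "w @ z"] assms(1,2) by simp
    moreover have "word_length (elem (z @ w)) = length (z @ w)"
      using word_length_reduced assms(1-3) by simp
    ultimately show False using eq by simp
  qed
  moreover have "(w @ z, z @ w) \<in> R" using elem_eqD eq assms(1,2) by simp
  ultimately show ?thesis using reduced_word_problem assms(3) by blast
qed

lemma centralizer_power_relation:
  assumes w: "w \<in> W" "cyc_reduced w" and "x \<in> supp w" "y \<in> supp w" "dist_ge_3 E x y"
    and b: "b \<in> carrier G" and comm: "elem w \<otimes>\<^bsub>G\<^esub> b = b \<otimes>\<^bsub>G\<^esub> elem w"
  obtains p1 p2 q :: nat
  where "0 < q" "elem w [^]\<^bsub>G\<^esub> p1 = b [^]\<^bsub>G\<^esub> q \<otimes>\<^bsub>G\<^esub> elem w [^]\<^bsub>G\<^esub> p2"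
proof -
  let ?a = "elem w"
  have a: "?a \<in> carrier G" using elem_in_carrier w(1) .
  obtain N :: nat and z
    where z: "b \<otimes>\<^bsub>G\<^esub> ?a [^]\<^bsub>G\<^esub> N = elem z" "z \<in> W" "reduced z" "reduced (z @ w)"
    using reduced_append_after_power[OF w b] .
  have "?a \<otimes>\<^bsub>G\<^esub> (b \<otimes>\<^bsub>G\<^esub> ?a [^]\<^bsub>G\<^esub> N) = b \<otimes>\<^bsub>G\<^esub> (?a \<otimes>\<^bsub>G\<^esub> ?a [^]\<^bsub>G\<^esub> N)"
    using a b comm raag.m_assoc[symmetric] by simp
  also have "?a \<otimes>\<^bsub>G\<^esub> ?a [^]\<^bsub>G\<^esub> N = ?a [^]\<^bsub>G\<^esub> N \<otimes>\<^bsub>G\<^esub> ?a"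
    using raag.nat_pow_Suc2[OF a, of N] by simp
  finally have "?a \<otimes>\<^bsub>G\<^esub> (b \<otimes>\<^bsub>G\<^esub> ?a [^]\<^bsub>G\<^esub> N) = (b \<otimes>\<^bsub>G\<^esub> ?a [^]\<^bsub>G\<^esub> N) \<otimes>\<^bsub>G\<^esub> ?a"
    using a b by (simp add: raag.m_assoc)
  then have "elem w \<otimes>\<^bsub>G\<^esub> elem z = elem z \<otimes>\<^bsub>G\<^esub> elem w" using z(1) by simp
  then have "w @ z \<approx> z @ w" using comm_equiv_if_elems_commute w(1) z(2,4) by blast
  then have "word_pow (occ x z) w \<approx> word_pow (occ x w) z"
    using commuting_word_pow assms(3-5) by blast
  then have "elem (word_pow (occ x z) w) = elem (word_pow (occ x w) z)"
    using w(1) by (intro elem_eq raag_rel_comm_equiv) simp_all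
  then have "?a [^]\<^bsub>G\<^esub> occ x z = elem z [^]\<^bsub>G\<^esub> occ x w"
    using pow_elem w(1) z(2) by simp
  also have "\<dots> = b [^]\<^bsub>G\<^esub> occ x w \<otimes>\<^bsub>G\<^esub> (?a [^]\<^bsub>G\<^esub> N) [^]\<^bsub>G\<^esub> occ x w"
    unfolding z(1)[symmetric]
  proof (rule raag.pow_mult_distrib)
    show "b \<otimes>\<^bsub>G\<^esub> ?a [^]\<^bsub>G\<^esub> N = ?a [^]\<^bsub>G\<^esub> N \<otimes>\<^bsub>G\<^esub> b"
      using raag.group_commutes_pow[OF comm a b] by simp
  qed (use a b in simp_all)
  also have "\<dots> = b [^]\<^bsub>G\<^esub> occ x w \<otimes>\<^bsub>G\<^esub> ?a [^]\<^bsub>G\<^esub> (N * occ x w)"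
    using raag.nat_pow_pow[OF a] by simp
  finally show ?thesis using that[OF occ_pos[OF \<open>x \<in> supp w\<close>]] by simp
qed

definition delete_vertex :: "'v \<Rightarrow> ('v \<times> bool) list \<Rightarrow> ('v \<times> bool) list" where
  "delete_vertex v w = filter (\<lambda>l. fst l \<noteq> v) w"

lemma delete_vertex_simps[simp]:
  "delete_vertex v [] = []"
  "delete_vertex v (u @ w) = delete_vertex v u @ delete_vertex v w"
  "delete_vertex v (l # w) = (if fst l = v then delete_vertex v w else l # delete_vertex v w)"
  by (simp_all add: delete_vertex_def)

lemma delete_vertex_words: "w \<in> W \<Longrightarrow> delete_vertex v w \<in> W"
  by (induction w) auto

lemma delete_vertex_word_inv: "delete_vertex v (word_inv w) = word_inv (delete_vertex v w)"
  by (induction w) auto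

lemma delete_vertex_word_pow: "delete_vertex v (word_pow n w) = word_pow n (delete_vertex v w)"
  by (induction n) auto

lemma delete_vertex_id: "v \<notin> supp w \<Longrightarrow> delete_vertex v w = w"
  by (induction w) auto

lemma length_delete_vertex_less: "v \<in> supp w \<Longrightarrow> length (delete_vertex v w) < length w"
  unfolding delete_vertex_def by (auto intro: length_filter_less)

lemma raag_rel_delete_vertex: "(u, u') \<in> R \<Longrightarrow> (delete_vertex v u, delete_vertex v u') \<in> R"
proof (induction rule: raag_rel_induct)
  case (refl u)
  then show ?case using raag_rel_refl delete_vertex_words by blast
next
  case (step u u')
  then have "u' \<in> W" using raag_step_words by blast
  from step show ?case
  proof (cases rule: raag_step_cases)
    case (cancel xs ys a s)
    then show ?thesis
      using raag_rel_refl raag_rel_step raag_step_cancel delete_vertex_words \<open>u' \<in> W\<close>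
      by (cases "a = v") auto
  next
    case (swap xs ys a s c t)
    then show ?thesis
      using raag_rel_refl raag_rel_step raag_step_swap delete_vertex_words \<open>u' \<in> W\<close>
      by (cases "a = v \<or> c = v") auto
  qed
qed (auto intro: raag_rel_sym raag_rel_trans)

lemma word_length_le_conj_delete_vertex:
  assumes "(u, word_inv c @ w @ c) \<in> R" "v \<notin> supp w" "c \<in> W" "w \<in> W"
  shows "word_length (elem w) \<le> 2 * length c + length (delete_vertex v u)"
proof -
  define d where "d = delete_vertex v c"
  define X where "X = delete_vertex v u"
  have "d \<in> W" "X \<in> W"
    unfolding d_def X_def using delete_vertex_words assms(1,3) raag_rel_words by blast+
  have "(X, word_inv d @ w @ d) \<in> R"
    using raag_rel_delete_vertex[OF assms(1), of v] assms(2) unfolding X_def d_def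
    by (simp add: delete_vertex_id delete_vertex_word_inv)
  then have "elem X = inv\<^bsub>G\<^esub> elem d \<otimes>\<^bsub>G\<^esub> elem w \<otimes>\<^bsub>G\<^esub> elem d"
    using elem_eq mult_elem inv_elem \<open>d \<in> W\<close> assms(4) by simp
  then have "elem w = elem d \<otimes>\<^bsub>G\<^esub> elem X \<otimes>\<^bsub>G\<^esub> inv\<^bsub>G\<^esub> elem d"
    using raag.conj_inv_cancel \<open>d \<in> W\<close> assms(4) elem_in_carrier by simp
  also have "\<dots> = elem (d @ X @ word_inv d)"
    using mult_elem inv_elem \<open>d \<in> W\<close> \<open>X \<in> W\<close> by simp
  finally have "word_length (elem w) \<le> length (d @ X @ word_inv d)"
    using word_length_le[OF mem_elem_self[of "d @ X @ word_inv d"]] \<open>d \<in> W\<close> \<open>X \<in> W\<close>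
    by simp
  moreover have "length d \<le> length c" unfolding d_def delete_vertex_def by simp
  ultimately show ?thesis unfolding X_def by simp
qed

text \<open>Deleting v from the conjugation of w2^N into w1^N bounds the length N |w1| of
  the reduced word w1^N by 2 |c| + N (|w1| - 1) if v occurs in w2 but not in w1.\<close>

lemma supp_conj_cyc_reduced:
  assumes w1: "w1 \<in> W" "cyc_reduced w1" and "w2 \<in> W" and "length w2 \<le> length w1"
    and h: "h \<in> carrier G" and conj: "elem w2 = inv\<^bsub>G\<^esub> h \<otimes>\<^bsub>G\<^esub> elem w1 \<otimes>\<^bsub>G\<^esub> h"
  shows "supp w2 \<subseteq> supp w1"
proof
  fix v assume "v \<in> supp w2"
  show "v \<in> supp w1"
  proof (rule ccontr)
    assume "v \<notin> supp w1"
    obtain c where c: "c \<in> W" "h = elem c" using h by (rule carrier_raagE)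
    define N :: nat where "N = 2 * length c + 1"
    have "elem w2 [^]\<^bsub>G\<^esub> N = inv\<^bsub>G\<^esub> h \<otimes>\<^bsub>G\<^esub> elem w1 [^]\<^bsub>G\<^esub> N \<otimes>\<^bsub>G\<^esub> h"
      using conj raag.conj_pow h elem_in_carrier w1(1) by simp
    then have "elem (word_pow N w2) = elem (word_inv c @ word_pow N w1 @ c)"
      using pow_elem mult_elem inv_elem c w1(1) \<open>w2 \<in> W\<close> by simp
    then have rel: "(word_pow N w2, word_inv c @ word_pow N w1 @ c) \<in> R"
      using elem_eqD \<open>w2 \<in> W\<close> by simp
    have "v \<notin> supp (word_pow N w1)"
      using \<open>v \<notin> supp w1\<close> by (simp add: word_pow_def set_replicate_conv_if)
    then have "word_length (elem (word_pow N w1)) \<le> 2 * length c + N * length (delete_vertex v w2)"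
      using word_length_le_conj_delete_vertex[OF rel _ c(1) word_pow_words[OF w1(1)]]
      by (simp add: delete_vertex_word_pow)
    moreover have "word_length (elem (word_pow N w1)) = N * length w1"
      using word_length_reduced reduced_word_pow w1 by simp
    moreover have "length (delete_vertex v w2) + 1 \<le> length w1"
      using length_delete_vertex_less[OF \<open>v \<in> supp w2\<close>] assms(4) by simp
    ultimately have "N * (length (delete_vertex v w2) + 1) \<le> 2 * length c + N * length (delete_vertex v w2)"
      by (metis dual_order.trans mult_le_mono2)
    then show False unfolding N_def by simp
  qed
qed

definition exp_sum :: "'v \<Rightarrow> ('v \<times> bool) list \<Rightarrow> int" where
  "exp_sum c w = sum_list (map (\<lambda>l. if fst l = c then (if snd l then 1 else -1) else 0) w)"

lemma exp_sum_simps[simp]: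
  "exp_sum c [] = 0"
  "exp_sum c (u @ w) = exp_sum c u + exp_sum c w"
  "exp_sum c (l # w) = (if fst l = c then (if snd l then 1 else -1) else 0) + exp_sum c w"
  by (simp_all add: exp_sum_def)

lemma exp_sum_raag_rel: "(u, u') \<in> R \<Longrightarrow> exp_sum c u = exp_sum c u'"
  by (induction rule: raag_rel_induct) (auto elim: raag_step_cases)

lemma exp_sum_gen_pow: "exp_sum c (word_pow n [(d, True)]) = (if d = c then int n else 0)"
  by (induction n) auto

lemma raag_gen_in_carrier: "v \<in> V \<Longrightarrow> raag_gen V E v \<in> carrier G"
  unfolding raag_gen_eq by (rule elem_in_carrier) simp

lemma raag_gen_commute:
  assumes "E a c"
  shows "raag_gen V E a \<otimes>\<^bsub>G\<^esub> raag_gen V E c = raag_gen V E c \<otimes>\<^bsub>G\<^esub> raag_gen V E a"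
proof -
  have "a \<in> V" "c \<in> V" using E_in_V assms by blast+
  then have "([] @ [(a, True), (c, True)] @ [], [] @ [(c, True), (a, True)] @ []) \<in> R"
    using assms by (intro raag_rel_step raag_step_swap) simp_all
  then show ?thesis
    using elem_eq mult_elem \<open>a \<in> V\<close> \<open>c \<in> V\<close> unfolding raag_gen_eq by simp
qed

lemma raag_gen_pow_ne:
  assumes "u \<noteq> v" "u \<in> V" "v \<in> V" "0 < q"
  shows "raag_gen V E v [^]\<^bsub>G\<^esub> (p1::nat)
    \<noteq> raag_gen V E u [^]\<^bsub>G\<^esub> (q::nat) \<otimes>\<^bsub>G\<^esub> raag_gen V E v [^]\<^bsub>G\<^esub> (p2::nat)"
proof
  assume "raag_gen V E v [^]\<^bsub>G\<^esub> p1
    = raag_gen V E u [^]\<^bsub>G\<^esub> q \<otimes>\<^bsub>G\<^esub> raag_gen V E v [^]\<^bsub>G\<^esub> p2"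
  then have "elem (word_pow p1 [(v, True)]) = elem (word_pow q [(u, True)] @ word_pow p2 [(v, True)])"
    unfolding raag_gen_eq using pow_elem mult_elem assms(2,3) by simp
  then have "(word_pow p1 [(v, True)], word_pow q [(u, True)] @ word_pow p2 [(v, True)]) \<in> R"
    using elem_eqD assms(3) by simp
  then have "exp_sum u (word_pow p1 [(v, True)])
      = exp_sum u (word_pow q [(u, True)] @ word_pow p2 [(v, True)])"
    by (rule exp_sum_raag_rel)
  then show False using exp_sum_gen_pow assms(1,4) by simp
qed

definition conj_words :: "('v \<times> bool) list set \<Rightarrow> ('v \<times> bool) list set" where
  "conj_words g = {w. \<exists>h\<in>carrier G. w \<in> inv\<^bsub>G\<^esub> h \<otimes>\<^bsub>G\<^esub> g \<otimes>\<^bsub>G\<^esub> h}"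

lemma esupp_conj_words:
  "esupp V E g = {v. \<exists>w\<in>conj_words g. (\<forall>w'\<in>conj_words g. length w \<le> length w') \<and> v \<in> supp w}"
  unfolding esupp_def conj_words_def Let_def ..

lemma conj_words_strip_ends:
  assumes g: "g \<in> carrier G" and w: "w \<in> conj_words g" and lm: "w \<approx> l # m @ [letter_inv l]"
  shows "m \<in> conj_words g"
proof -
  obtain h where h: "h \<in> carrier G" "w \<in> inv\<^bsub>G\<^esub> h \<otimes>\<^bsub>G\<^esub> g \<otimes>\<^bsub>G\<^esub> h"
    using w unfolding conj_words_def by blast
  let ?X = "inv\<^bsub>G\<^esub> h \<otimes>\<^bsub>G\<^esub> g \<otimes>\<^bsub>G\<^esub> h"
  have X: "?X \<in> carrier G" using g h(1) by simp
  have r: "(w, l # m @ [letter_inv l]) \<in> R"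
    using raag_rel_comm_equiv lm carrier_words[OF X h(2)] by blast
  then have "fst l \<in> V" "m \<in> W" using raag_rel_words[OF r] by auto
  let ?k = "elem [l]"
  have k: "?k \<in> carrier G" using elem_in_carrier \<open>fst l \<in> V\<close> by simp
  have "inv\<^bsub>G\<^esub> (h \<otimes>\<^bsub>G\<^esub> ?k) \<otimes>\<^bsub>G\<^esub> g \<otimes>\<^bsub>G\<^esub> (h \<otimes>\<^bsub>G\<^esub> ?k) = inv\<^bsub>G\<^esub> ?k \<otimes>\<^bsub>G\<^esub> ?X \<otimes>\<^bsub>G\<^esub> ?k"
    using raag.conj_conj g h(1) k by simp
  also have "\<dots> = elem ([letter_inv l] @ (l # m @ [letter_inv l]) @ [l])"
    using carrier_eq_elem[OF X h(2)] elem_eq[OF r] inv_elem mult_elem \<open>fst l \<in> V\<close> \<open>m \<in> W\<close>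
    by simp
  also have "\<dots> = elem m"
  proof (rule elem_eq)
    have "([letter_inv l, l], []) \<in> R"
      using raag_rel_cancel_pair[of "letter_inv l"] \<open>fst l \<in> V\<close> by simp
    then have "([letter_inv l, l] @ m @ [letter_inv l, l], [] @ m @ []) \<in> R"
      using raag_rel_append raag_rel_refl[OF \<open>m \<in> W\<close>] by blast
    then show "([letter_inv l] @ (l # m @ [letter_inv l]) @ [l], m) \<in> R" by simp
  qed
  finally have "m \<in> inv\<^bsub>G\<^esub> (h \<otimes>\<^bsub>G\<^esub> ?k) \<otimes>\<^bsub>G\<^esub> g \<otimes>\<^bsub>G\<^esub> (h \<otimes>\<^bsub>G\<^esub> ?k)"
    using mem_elem_self \<open>m \<in> W\<close> by simp
  moreover have "h \<otimes>\<^bsub>G\<^esub> ?k \<in> carrier G" using h(1) k by simp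
  ultimately show ?thesis unfolding conj_words_def by blast
qed

lemma shortest_conj_word_cyc_reduced:
  assumes g: "g \<in> carrier G" and w: "w \<in> conj_words g"
    and shortest: "\<forall>w'\<in>conj_words g. length w \<le> length w'"
  shows "w \<in> W" "cyc_reduced w"
proof -
  obtain h where h: "h \<in> carrier G" "w \<in> inv\<^bsub>G\<^esub> h \<otimes>\<^bsub>G\<^esub> g \<otimes>\<^bsub>G\<^esub> h"
    using w unfolding conj_words_def by blast
  let ?X = "inv\<^bsub>G\<^esub> h \<otimes>\<^bsub>G\<^esub> g \<otimes>\<^bsub>G\<^esub> h"
  have X: "?X \<in> carrier G" using g h(1) by simp
  show "w \<in> W" using carrier_words X h(2) .
  have "?X \<subseteq> conj_words g" using h(1) unfolding conj_words_def by blast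
  then have "reduced w" using reduced_if_shortest[OF X h(2)] shortest by blast
  moreover have "\<not> w \<approx> l # m @ [letter_inv l]" for l m
  proof
    assume lm: "w \<approx> l # m @ [letter_inv l]"
    then have "length w \<le> length m" using conj_words_strip_ends g w shortest by blast
    then show False using comm_equiv_length[OF lm] by simp
  qed
  ultimately show "cyc_reduced w" unfolding cyc_reduced_def by blast
qed

lemma esupp_eq_supp:
  assumes g: "g \<in> carrier G" and w: "w \<in> conj_words g"
    and shortest: "\<forall>w'\<in>conj_words g. length w \<le> length w'"
  shows "esupp V E g = supp w"
proof
  show "supp w \<subseteq> esupp V E g" using w shortest unfolding esupp_conj_words by blast
next
  show "esupp V E g \<subseteq> supp w"
  proof
    fix v assume "v \<in> esupp V E g"
    then obtain w' where w': "w' \<in> conj_words g" "\<forall>w''\<in>conj_words g. length w' \<le> length w''"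
      and "v \<in> supp w'"
      unfolding esupp_conj_words by blast
    obtain h where h: "h \<in> carrier G" "w \<in> inv\<^bsub>G\<^esub> h \<otimes>\<^bsub>G\<^esub> g \<otimes>\<^bsub>G\<^esub> h"
      using w unfolding conj_words_def by blast
    obtain h' where h': "h' \<in> carrier G" "w' \<in> inv\<^bsub>G\<^esub> h' \<otimes>\<^bsub>G\<^esub> g \<otimes>\<^bsub>G\<^esub> h'"
      using w'(1) unfolding conj_words_def by blast
    have "elem w = inv\<^bsub>G\<^esub> h \<otimes>\<^bsub>G\<^esub> g \<otimes>\<^bsub>G\<^esub> h" "elem w' = inv\<^bsub>G\<^esub> h' \<otimes>\<^bsub>G\<^esub> g \<otimes>\<^bsub>G\<^esub> h'"
      using carrier_eq_elem[OF _ h(2)] carrier_eq_elem[OF _ h'(2)] g h(1) h'(1) by simp_all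
    moreover have "h \<otimes>\<^bsub>G\<^esub> (inv\<^bsub>G\<^esub> h \<otimes>\<^bsub>G\<^esub> h') = h'"
      using h(1) h'(1) by (simp add: raag.m_assoc[symmetric])
    ultimately have "elem w' = inv\<^bsub>G\<^esub> (inv\<^bsub>G\<^esub> h \<otimes>\<^bsub>G\<^esub> h') \<otimes>\<^bsub>G\<^esub> elem w \<otimes>\<^bsub>G\<^esub> (inv\<^bsub>G\<^esub> h \<otimes>\<^bsub>G\<^esub> h')"
      using raag.conj_conj[of h "inv\<^bsub>G\<^esub> h \<otimes>\<^bsub>G\<^esub> h'" g] g h(1) h'(1) by simp
    moreover have "w \<in> W" "cyc_reduced w" "w' \<in> W"
      using shortest_conj_word_cyc_reduced[OF g] w shortest w'(1,2) by blast+
    moreover have "length w' \<le> length w" using w'(2) w by blast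
    moreover have "inv\<^bsub>G\<^esub> h \<otimes>\<^bsub>G\<^esub> h' \<in> carrier G" using h(1) h'(1) by simp
    ultimately have "supp w' \<subseteq> supp w" using supp_conj_cyc_reduced by blast
    then show "v \<in> supp w" using \<open>v \<in> supp w'\<close> by blast
  qed
qed

lemma no_far_pair_in_image_of_gen:
  assumes \<phi>: "\<phi> \<in> hom G G" "inj_on \<phi> (carrier G)" and "E v u"
    and w: "\<phi> (raag_gen V E v) = elem w" "w \<in> W" "cyc_reduced w"
    and far: "x \<in> supp w" "y \<in> supp w" "dist_ge_3 E x y"
  shows False
proof -
  let ?gv = "raag_gen V E v" and ?gu = "raag_gen V E u"
  have "v \<in> V" "u \<in> V" "u \<noteq> v" using E_in_V E_irrefl \<open>E v u\<close> by blast+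
  then have gens: "?gv \<in> carrier G" "?gu \<in> carrier G" using raag_gen_in_carrier by blast+
  have "elem w \<otimes>\<^bsub>G\<^esub> \<phi> ?gu = \<phi> ?gu \<otimes>\<^bsub>G\<^esub> elem w"
    using raag_gen_commute[OF \<open>E v u\<close>] hom_mult[OF \<phi>(1)] gens w(1) by metis
  then obtain p1 p2 q :: nat where "0 < q"
    and "elem w [^]\<^bsub>G\<^esub> p1 = \<phi> ?gu [^]\<^bsub>G\<^esub> q \<otimes>\<^bsub>G\<^esub> elem w [^]\<^bsub>G\<^esub> p2"
    using centralizer_power_relation[OF w(2,3) far] hom_in_carrier[OF \<phi>(1) gens(2)] by metis
  then have "\<phi> (?gv [^]\<^bsub>G\<^esub> p1) = \<phi> (?gu [^]\<^bsub>G\<^esub> q \<otimes>\<^bsub>G\<^esub> ?gv [^]\<^bsub>G\<^esub> p2)"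
    using hom_nat_pow[OF \<phi>(1) _ group_raag group_raag] hom_mult[OF \<phi>(1)] gens w(1) by simp
  then have "?gv [^]\<^bsub>G\<^esub> p1 = ?gu [^]\<^bsub>G\<^esub> q \<otimes>\<^bsub>G\<^esub> ?gv [^]\<^bsub>G\<^esub> p2"
    using inj_onD[OF \<phi>(2)] gens by simp
  then show False using raag_gen_pow_ne \<open>u \<noteq> v\<close> \<open>u \<in> V\<close> \<open>v \<in> V\<close> \<open>0 < q\<close> by blast
qed

end

theorem lemma7p1:
  fixes V :: "'v set" and E :: "'v \<Rightarrow> 'v \<Rightarrow> bool" and v1 v2 :: 'v
    and f :: "('v \<times> bool) list set \<Rightarrow> ('v \<times> bool) list set"
  assumes "simple_graph V E" and "no_isolated V E"
    and "v1 \<in> V" and "v2 \<in> V" and "dist_ge_3 E v1 v2"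
    and "f \<in> iso (raag V E) (raag V E)"
    and "v1 \<in> esupp V E (f (raag_gen V E v1))"
  shows "v2 \<notin> esupp V E (f (raag_gen V E v1))"
proof
  assume v2: "v2 \<in> esupp V E (f (raag_gen V E v1))"
  interpret raag_graph E V
    using assms(1) unfolding simple_graph_def by unfold_locales blast+
  let ?g = "f (raag_gen V E v1)"
  have f: "f \<in> hom G G" "inj_on f (carrier G)"
    using assms(6) unfolding iso_def bij_betw_def by blast+
  have g: "?g \<in> carrier G" using hom_in_carrier[OF f(1) raag_gen_in_carrier[OF assms(3)]] .
  obtain w where w: "w \<in> conj_words ?g" "\<forall>w'\<in>conj_words ?g. length w \<le> length w'"
    and "v1 \<in> supp w"
    using assms(7) unfolding esupp_conj_words by blast
  have "v2 \<in> supp w" using v2 esupp_eq_supp[OF g w] by simp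
  obtain h where h: "h \<in> carrier G" "w \<in> inv\<^bsub>G\<^esub> h \<otimes>\<^bsub>G\<^esub> ?g \<otimes>\<^bsub>G\<^esub> h"
    using w(1) unfolding conj_words_def by blast
  have "inv\<^bsub>G\<^esub> h \<otimes>\<^bsub>G\<^esub> ?g \<otimes>\<^bsub>G\<^esub> h = elem w"
    using carrier_eq_elem[OF _ h(2)] g h(1) by simp
  moreover obtain u where "E v1 u" using assms(2,3) unfolding no_isolated_def by blast
  ultimately show False
    using no_far_pair_in_image_of_gen[OF raag.conj_hom[OF f(1) h(1)] raag.inj_on_conj[OF f(2) _ h(1)]]
      shortest_conj_word_cyc_reduced[OF g w] \<open>v1 \<in> supp w\<close> \<open>v2 \<in> supp w\<close> assms(5)
      hom_in_carrier[OF f(1)] by blast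
qed
end
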